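(* Let $\mu$ be an admissible measure on $\mathbb R$ and $m:=\mu(\mathbb R)$. Then \[ 1-m\le T(\mu)\le\sqrt{1-m^2}, \] where $T(\mu):=\frac12\int_{\mathbb R}|e^x-e^{-x}|\,\mu(dx)$.
   Context: A finitely supported positive measure $\mu$ on $\mathbb R$ is called admissible if $\int e^x\,\mu(dx)=\int e^{-x}\,\mu(dx)=1$. *)

theory Defs
  imports "HOL-Analysis.Analysis"
begin

text \<open>A finitely supported positive measure on the reals is represented by its
  weight function w (w x = mass of the atom at x), which is nonnegative and
  vanishes outside a finite set.\<close>

definition fin_supp_measure :: "(real \<Rightarrow> real) \<Rightarrow> bool" where
  "fin_supp_measure w \<longleftrightarrow> (\<forall>x. 0 \<le> w x) \<and> finite {x. w x \<noteq> 0}"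

definition integ :: "(real \<Rightarrow> real) \<Rightarrow> (real \<Rightarrow> real) \<Rightarrow> real" where
  "integ w f = (\<Sum>x\<in>{x. w x \<noteq> 0}. f x * w x)"

definition total_mass :: "(real \<Rightarrow> real) \<Rightarrow> real" where
  "total_mass w = integ w (\<lambda>_. 1)"

definition admissible :: "(real \<Rightarrow> real) \<Rightarrow> bool" where
  "admissible w \<longleftrightarrow> fin_supp_measure w \<and> integ w exp = 1 \<and> integ w (\<lambda>x. exp (- x)) = 1"

definition T :: "(real \<Rightarrow> real) \<Rightarrow> real" where
  "T w = 1/2 * integ w (\<lambda>x. \<bar>exp x - exp (- x)\<bar>)"

end

theory Submission
  imports Defs
begin

text \<open>With \<open>c = cosh\<close> and \<open>s = \<bar>sinh\<bar>\<close>, admissibility says exactly that \<open>\<integral> c d\<mu> = 1\<close>,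
  while \<open>T(\<mu>) = \<integral> s d\<mu>\<close> and \<open>m = \<integral> 1 d\<mu>\<close>. The lower bound integrates the pointwise
  inequality \<open>c \<le> s + 1\<close>. For the upper bound, \<open>(m, T(\<mu>))\<close> is the integral of the planar
  vector \<open>(1, s)\<close>, whose length is \<open>sqrt (1 + s\<^sup>2) = c\<close>; by the triangle inequality
  \<open>sqrt (m\<^sup>2 + T(\<mu>)\<^sup>2) \<le> \<integral> c d\<mu> = 1\<close>.\<close>

lemma integ_add: "integ w (\<lambda>x. f x + g x) = integ w f + integ w g"
  unfolding integ_def by (simp add: distrib_right sum.distrib)

lemma integ_cmult: "integ w (\<lambda>x. a * f x) = a * integ w f"
  unfolding integ_def by (simp add: sum_distrib_left mult.assoc)

lemma integ_mono:
  assumes "fin_supp_measure w" and "\<And>x. f x \<le> g x"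
  shows "integ w f \<le> integ w g"
  unfolding integ_def
  using assms by (auto simp: fin_supp_measure_def intro!: sum_mono mult_right_mono)

lemma integ_cong: "(\<And>x. f x = g x) \<Longrightarrow> integ w f = integ w g"
  by (metis ext)

lemma integ_pair_norm_le:
  assumes "fin_supp_measure w"
  shows "sqrt ((integ w f)\<^sup>2 + (integ w g)\<^sup>2) \<le> integ w (\<lambda>x. sqrt ((f x)\<^sup>2 + (g x)\<^sup>2))"
proof -
  define S where "S = {x. w x \<noteq> 0}"
  have "sqrt ((integ w f)\<^sup>2 + (integ w g)\<^sup>2) = norm (\<Sum>x\<in>S. Complex (f x * w x) (g x * w x))"
    by (simp add: cmod_def Re_sum Im_sum integ_def S_def)
  also have "\<dots> \<le> (\<Sum>x\<in>S. norm (Complex (f x * w x) (g x * w x)))"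
    by (rule norm_sum)
  also have "\<dots> = integ w (\<lambda>x. sqrt ((f x)\<^sup>2 + (g x)\<^sup>2))"
  proof -
    have "norm (Complex (f x * w x) (g x * w x)) = sqrt ((f x)\<^sup>2 + (g x)\<^sup>2) * w x" for x
      using assms
      by (simp add: fin_supp_measure_def cmod_def power_mult_distrib real_sqrt_mult
          flip: distrib_right)
    then show ?thesis by (simp add: integ_def S_def)
  qed
  finally show ?thesis .
qed

lemma cosh_le_abs_sinh_plus_1: "cosh x \<le> \<bar>sinh x\<bar> + 1" for x :: real
proof -
  have "cosh x - \<bar>sinh x\<bar> = exp (- \<bar>x\<bar>)"
    by (metis cosh_minus_sinh cosh_real_abs sinh_real_abs)
  moreover have "exp (- \<bar>x\<bar>) \<le> 1" by simp
  ultimately show ?thesis by linarith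
qed

lemma sqrt_one_plus_sinh_sq: "sqrt (1 + (sinh x)\<^sup>2) = cosh x" for x :: real
proof -
  have "1 + (sinh x)\<^sup>2 = (cosh x)\<^sup>2" by (simp add: cosh_square_eq)
  then show ?thesis by simp
qed

lemma admissible_integ_cosh:
  assumes "admissible w"
  shows "integ w cosh = 1"
proof -
  have "integ w cosh = integ w (\<lambda>x. 1/2 * (exp x + exp (- x)))"
    by (rule integ_cong) (simp add: cosh_field_def)
  also have "\<dots> = 1/2 * (integ w exp + integ w (\<lambda>x. exp (- x)))"
    by (simp only: integ_cmult integ_add)
  finally show ?thesis using assms by (simp add: admissible_def)
qed

lemma T_eq_integ_abs_sinh: "T w = integ w (\<lambda>x. \<bar>sinh x\<bar>)"
  by (simp add: T_def sinh_field_def integ_cmult[symmetric])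

theorem lemma6:
  fixes w :: "real \<Rightarrow> real"
  assumes "admissible w"
  shows "1 - total_mass w \<le> T w \<and> T w \<le> sqrt (1 - (total_mass w)\<^sup>2)"
proof -
  have w: "fin_supp_measure w" using assms by (simp add: admissible_def)
  have "1 = integ w cosh" using admissible_integ_cosh[OF assms] ..
  also have "\<dots> \<le> integ w (\<lambda>x. \<bar>sinh x\<bar> + 1)"
    using w cosh_le_abs_sinh_plus_1 by (rule integ_mono)
  also have "\<dots> = T w + total_mass w"
    by (simp add: integ_add T_eq_integ_abs_sinh total_mass_def)
  finally have lower: "1 - total_mass w \<le> T w" by simp
  have "sqrt ((total_mass w)\<^sup>2 + (T w)\<^sup>2) \<le> integ w (\<lambda>x. sqrt (1 + (sinh \<bar>x\<bar>)\<^sup>2))"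
    using integ_pair_norm_le[OF w, of "\<lambda>_. 1" "\<lambda>x. sinh \<bar>x\<bar>"]
    by (simp add: total_mass_def T_eq_integ_abs_sinh)
  also have "\<dots> = 1"
    by (simp add: sqrt_one_plus_sinh_sq admissible_integ_cosh[OF assms])
  finally have "(T w)\<^sup>2 \<le> 1 - (total_mass w)\<^sup>2"
    by (simp add: real_sqrt_le_1_iff)
  then have "T w \<le> sqrt (1 - (total_mass w)\<^sup>2)"
    using real_le_rsqrt by blast
  with lower show ?thesis ..
qed

end
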